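(* Let $H$ be a homogeneous relation on a finite set $V$ with $|V|\ge 2$ and let $x\in V$. Let $P_0$ be the partition of $V\setminus\{x\}$ into the equivalence classes of $H_x$. Consider the following refinement rule applied to a partition $P$ of $V\setminus\{x\}$ with a pivot $y\in V\setminus\{x\}$: letting $C(y)$ be the class of $P$ containing $y$, replace every class $C\neq C(y)$ of $P$ by the nonempty sets among $C\cap K$, where $K$ ranges over the equivalence classes of $H_y$. Starting from $P_0$ and applying this rule with arbitrary pivots in an arbitrary order until no application of the rule changes the partition, the final partition equals $MHS(x)$, the partition of $V\setminus\{x\}$ into the inclusion-maximal homogeneous sets not containing $x$.
   Context: $V$ is a finite set. A reflectless triple is a triple $(x,y,z)\in V^3$ with $x\neq y$ and $x\neq z$, written $(x|yz)$. A homogeneous relation $H$ on $V$ is a set of reflectless triples (we write $H(s|xy)$ when $(s|xy)\in H$) such that for every $s\in V$ the binary relation $H_s=\{(x,y): H(s|xy)\}$ is an equivalence relation on $V\setminus\{s\}$. For $X\subseteq V$ and $s\notin X$, $s$ distinguishes $X$ if there are $x,y\in X$ with not $H(s|xy)$. A homogeneous set is a nonempty $M\subseteq V$ such that no element of $V\setminus M$ distinguishes $M$. The inclusion-maximal homogeneous sets not containing $x$ form a partition of $V\setminus\{x\}$, denoted $MHS(x)$. *)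

theory Defs
  imports Main
begin

text \<open>Triples (s,x,y) are written (s|xy) in the paper.  A homogeneous relation on V
is a set of reflectless triples over V such that every H_s is an equivalence
relation on V - {s}.\<close>

definition H_at :: "('a \<times> 'a \<times> 'a) set \<Rightarrow> 'a \<Rightarrow> ('a \<times> 'a) set" where
  "H_at H s = {(a, b). (s, a, b) \<in> H}"

definition reflectless :: "'a set \<Rightarrow> ('a \<times> 'a \<times> 'a) set" where
  "reflectless V = {(s, a, b). s \<in> V \<and> a \<in> V \<and> b \<in> V \<and> s \<noteq> a \<and> s \<noteq> b}"

definition homogeneous_rel :: "'a set \<Rightarrow> ('a \<times> 'a \<times> 'a) set \<Rightarrow> bool" where
  "homogeneous_rel V H \<longleftrightarrow> H \<subseteq> reflectless V \<and> (\<forall>s\<in>V. equiv (V - {s}) (H_at H s))"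

definition distinguishes :: "('a \<times> 'a \<times> 'a) set \<Rightarrow> 'a \<Rightarrow> 'a set \<Rightarrow> bool" where
  "distinguishes H s X \<longleftrightarrow> (\<exists>a\<in>X. \<exists>b\<in>X. (s, a, b) \<notin> H)"

definition homogeneous_set :: "'a set \<Rightarrow> ('a \<times> 'a \<times> 'a) set \<Rightarrow> 'a set \<Rightarrow> bool" where
  "homogeneous_set V H M \<longleftrightarrow> M \<noteq> {} \<and> M \<subseteq> V \<and> (\<forall>s\<in>V - M. \<not> distinguishes H s M)"

definition MHS :: "'a set \<Rightarrow> ('a \<times> 'a \<times> 'a) set \<Rightarrow> 'a \<Rightarrow> 'a set set" where
  "MHS V H x = {M. homogeneous_set V H M \<and> x \<notin> M \<and>
     (\<forall>M'. homogeneous_set V H M' \<and> x \<notin> M' \<and> M \<subseteq> M' \<longrightarrow> M' = M)}"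

definition refine :: "'a set \<Rightarrow> ('a \<times> 'a \<times> 'a) set \<Rightarrow> 'a set set \<Rightarrow> 'a \<Rightarrow> 'a set set" where
  "refine V H P y =
     {C. C \<in> P \<and> y \<in> C} \<union>
     {C \<inter> K | C K. C \<in> P \<and> y \<notin> C \<and> K \<in> (V - {y}) // H_at H y \<and> C \<inter> K \<noteq> {}}"

definition initial_partition :: "'a set \<Rightarrow> ('a \<times> 'a \<times> 'a) set \<Rightarrow> 'a \<Rightarrow> 'a set set" where
  "initial_partition V H x = (V - {x}) // H_at H x"

definition refine_step :: "'a set \<Rightarrow> ('a \<times> 'a \<times> 'a) set \<Rightarrow> 'a \<Rightarrow> 'a set set \<Rightarrow> 'a set set \<Rightarrow> bool" where
  "refine_step V H x P P' \<longleftrightarrow> (\<exists>y \<in> V - {x}. P' = refine V H P y)"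

definition refine_stable :: "'a set \<Rightarrow> ('a \<times> 'a \<times> 'a) set \<Rightarrow> 'a \<Rightarrow> 'a set set \<Rightarrow> bool" where
  "refine_stable V H x P \<longleftrightarrow> (\<forall>y \<in> V - {x}. refine V H P y = P)"

end

theory Submission
  imports Defs
begin

text \<open>Every partition reachable from the H_x-classes satisfies an invariant: its blocks
are nonempty, pairwise disjoint, contained in H_x-classes, and every homogeneous set M
avoiding x lies inside a single block. The last part survives a refinement step with
pivot y because M either contains y, and then its block is kept, or lies inside one
class of H_y. In a stable partition no block C is distinguished by any s outside it:
not by x, as C lies in an H_x-class, and not by any other s, since stability for the
pivot s keeps C inside an H_s-class. So the blocks are homogeneous, and being disjoint
and covering all homogeneous sets avoiding x, they are exactly the maximal ones.\<close>

lemma equiv_H_at: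
  assumes "homogeneous_rel V H" and "s \<in> V"
  shows "equiv (V - {s}) (H_at H s)"
  using assms unfolding homogeneous_rel_def by blast

lemma subset_class_not_distinguished:
  assumes "homogeneous_rel V H" and "s \<in> V"
    and K: "K \<in> (V - {s}) // H_at H s" and "C \<subseteq> K"
  shows "\<not> distinguishes H s C"
proof -
  have "(a, b) \<in> H_at H s" if "a \<in> K" "b \<in> K" for a b
    using quotient_eq_iff[OF equiv_H_at[OF assms(1,2)] K K that] by simp
  then show ?thesis
    using \<open>C \<subseteq> K\<close> unfolding distinguishes_def H_at_def by blast
qed

lemma homogeneous_set_subset_class:
  assumes "s \<in> V" and M: "homogeneous_set V H M" and "s \<notin> M"
  shows "\<exists>K \<in> (V - {s}) // H_at H s. M \<subseteq> K"
proof -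
  obtain m where "m \<in> M" using M unfolding homogeneous_set_def by blast
  have "H_at H s `` {m} \<in> (V - {s}) // H_at H s"
    using \<open>m \<in> M\<close> \<open>s \<notin> M\<close> M unfolding homogeneous_set_def by (blast intro: quotientI)
  moreover have "M \<subseteq> H_at H s `` {m}"
    using M assms(1,3) \<open>m \<in> M\<close>
    unfolding homogeneous_set_def distinguishes_def H_at_def by blast
  ultimately show ?thesis by blast
qed

lemma refine_block_cases:
  assumes "C \<in> refine V H P y"
  obtains "C \<in> P" "y \<in> C"
  | A K where "C = A \<inter> K" "A \<in> P" "y \<notin> A" "K \<in> (V - {y}) // H_at H y" "C \<noteq> {}"
  using assms unfolding refine_def by blast

lemma refine_block_subset_block:
  assumes "C \<in> refine V H P y"
  shows "\<exists>A \<in> P. C \<subseteq> A"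
  using assms by (cases rule: refine_block_cases) blast+

lemma empty_notin_refine:
  assumes "{} \<notin> P"
  shows "{} \<notin> refine V H P y"
  using assms by (blast elim: refine_block_cases)

lemma pairwise_disjnt_refine:
  assumes eq: "equiv (V - {y}) (H_at H y)" and disj: "pairwise disjnt P"
  shows "pairwise disjnt (refine V H P y)"
proof
  fix C1 C2
  assume C1: "C1 \<in> refine V H P y" and C2: "C2 \<in> refine V H P y" and "C1 \<noteq> C2"
  have decomp: "\<exists>A \<in> P. \<exists>K. C = A \<inter> K \<and>
      (if y \<in> A then K = UNIV else K \<in> (V - {y}) // H_at H y)"
    if "C \<in> refine V H P y" for C
    using that by (cases rule: refine_block_cases) auto
  obtain A1 K1 where A1: "A1 \<in> P" "C1 = A1 \<inter> K1"
    and K1: "if y \<in> A1 then K1 = UNIV else K1 \<in> (V - {y}) // H_at H y"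
    using decomp[OF C1] by blast
  obtain A2 K2 where A2: "A2 \<in> P" "C2 = A2 \<inter> K2"
    and K2: "if y \<in> A2 then K2 = UNIV else K2 \<in> (V - {y}) // H_at H y"
    using decomp[OF C2] by blast
  show "disjnt C1 C2"
  proof (cases "A1 = A2")
    case True
    with K1 K2 \<open>C1 \<noteq> C2\<close> A1(2) A2(2)
    have "K1 \<in> (V - {y}) // H_at H y" "K2 \<in> (V - {y}) // H_at H y" "K1 \<noteq> K2"
      by (auto split: if_splits)
    then have "K1 \<inter> K2 = {}" using quotient_disj[OF eq] by blast
    then show ?thesis using A1(2) A2(2) by (auto simp: disjnt_def)
  next
    case False
    then have "disjnt A1 A2" using disj A1(1) A2(1) by (rule pairwiseD[rotated 3])
    then show ?thesis using A1(2) A2(2) by (auto simp: disjnt_def)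
  qed
qed

lemma refine_keeps_homogeneous_set:
  assumes "y \<in> V" and M: "homogeneous_set V H M" and "A \<in> P" and "M \<subseteq> A"
  shows "\<exists>C \<in> refine V H P y. M \<subseteq> C"
proof (cases "y \<in> A")
  case True
  then have "A \<in> refine V H P y" using \<open>A \<in> P\<close> unfolding refine_def by blast
  then show ?thesis using \<open>M \<subseteq> A\<close> by blast
next
  case False
  then obtain K where K: "K \<in> (V - {y}) // H_at H y" "M \<subseteq> K"
    using homogeneous_set_subset_class[OF \<open>y \<in> V\<close> M] \<open>M \<subseteq> A\<close> by blast
  have "M \<noteq> {}" using M unfolding homogeneous_set_def by blast
  then have "A \<inter> K \<in> refine V H P y"
    using \<open>A \<in> P\<close> False K \<open>M \<subseteq> A\<close> unfolding refine_def by blast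
  then show ?thesis using \<open>M \<subseteq> A\<close> K(2) by blast
qed

definition refinement_invariant :: "'a set \<Rightarrow> ('a \<times> 'a \<times> 'a) set \<Rightarrow> 'a \<Rightarrow> 'a set set \<Rightarrow> bool" where
  "refinement_invariant V H x P \<longleftrightarrow>
     {} \<notin> P \<and> pairwise disjnt P \<and> (\<forall>C \<in> P. \<exists>K \<in> (V - {x}) // H_at H x. C \<subseteq> K) \<and>
     (\<forall>M. homogeneous_set V H M \<and> x \<notin> M \<longrightarrow> (\<exists>C \<in> P. M \<subseteq> C))"

lemma refinement_invariant_initial:
  assumes "homogeneous_rel V H" and "x \<in> V"
  shows "refinement_invariant V H x (initial_partition V H x)"
proof -
  have eq: "equiv (V - {x}) (H_at H x)" using equiv_H_at[OF assms] .
  have "pairwise disjnt ((V - {x}) // H_at H x)"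
    using quotient_disj[OF eq] unfolding pairwise_def disjnt_def by blast
  then show ?thesis
    unfolding refinement_invariant_def initial_partition_def
    using in_quotient_imp_non_empty[OF eq] homogeneous_set_subset_class[OF \<open>x \<in> V\<close>]
    by blast
qed

lemma refinement_invariant_refine:
  assumes hr: "homogeneous_rel V H" and inv: "refinement_invariant V H x P" and "y \<in> V"
  shows "refinement_invariant V H x (refine V H P y)"
proof -
  note inv' = inv[unfolded refinement_invariant_def]
  have nonempty: "{} \<notin> P" and disj: "pairwise disjnt P" using inv' by simp_all
  have in_class: "\<exists>K \<in> (V - {x}) // H_at H x. A \<subseteq> K" if "A \<in> P" for A
    using inv' that by simp
  have cover: "\<exists>A \<in> P. M \<subseteq> A" if "homogeneous_set V H M" "x \<notin> M" for M
    using inv' that by simp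
  have "\<exists>K \<in> (V - {x}) // H_at H x. C \<subseteq> K" if C: "C \<in> refine V H P y" for C
  proof -
    obtain A where "A \<in> P" "C \<subseteq> A" using refine_block_subset_block[OF C] by blast
    then show ?thesis using in_class[OF \<open>A \<in> P\<close>] by (meson subset_trans)
  qed
  moreover have "\<exists>C \<in> refine V H P y. M \<subseteq> C" if M: "homogeneous_set V H M" "x \<notin> M" for M
  proof -
    obtain A where "A \<in> P" "M \<subseteq> A" using cover[OF M] by blast
    then show ?thesis using refine_keeps_homogeneous_set[OF \<open>y \<in> V\<close> M(1)] by blast
  qed
  ultimately show ?thesis
    unfolding refinement_invariant_def
    using empty_notin_refine[OF nonempty] pairwise_disjnt_refine[OF equiv_H_at[OF hr \<open>y \<in> V\<close>] disj]
    by simp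
qed

lemma refinement_invariant_reachable:
  assumes "homogeneous_rel V H" and "x \<in> V"
    and "(refine_step V H x)\<^sup>*\<^sup>* (initial_partition V H x) P"
  shows "refinement_invariant V H x P"
  using assms(3)
proof (induction rule: rtranclp_induct)
  case base
  show ?case using refinement_invariant_initial[OF assms(1,2)] .
next
  case (step P P')
  then show ?case
    using refinement_invariant_refine[OF assms(1)] unfolding refine_step_def by blast
qed

lemma stable_block_homogeneous:
  assumes hr: "homogeneous_rel V H" and "x \<in> V"
    and inv: "refinement_invariant V H x P" and stable: "refine_stable V H x P"
    and "C \<in> P"
  shows "homogeneous_set V H C" and "x \<notin> C"
proof -
  obtain K where K: "K \<in> (V - {x}) // H_at H x" "C \<subseteq> K"
    using inv \<open>C \<in> P\<close> unfolding refinement_invariant_def by blast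
  have "K \<subseteq> V - {x}" using in_quotient_imp_subset[OF equiv_H_at[OF hr \<open>x \<in> V\<close>] K(1)] .
  then show "x \<notin> C" using K(2) by blast
  have "\<not> distinguishes H s C" if s: "s \<in> V - C" for s
  proof (cases "s = x")
    case True
    then show ?thesis using subset_class_not_distinguished[OF hr \<open>x \<in> V\<close> K] by simp
  next
    case False
    then have "C \<in> refine V H P s" using stable s \<open>C \<in> P\<close> unfolding refine_stable_def by simp
    then obtain K' where "K' \<in> (V - {s}) // H_at H s" "C \<subseteq> K'"
      using s by (cases rule: refine_block_cases) blast+
    then show ?thesis using subset_class_not_distinguished[OF hr] s by blast
  qed
  moreover have "C \<noteq> {}" using inv \<open>C \<in> P\<close> unfolding refinement_invariant_def by blast
  ultimately show "homogeneous_set V H C"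
    using K(2) \<open>K \<subseteq> V - {x}\<close> unfolding homogeneous_set_def by blast
qed

lemma MHS_eqI:
  assumes disj: "pairwise disjnt P"
    and blocks: "\<And>C. C \<in> P \<Longrightarrow> homogeneous_set V H C \<and> x \<notin> C"
    and cover: "\<And>M. homogeneous_set V H M \<Longrightarrow> x \<notin> M \<Longrightarrow> \<exists>C \<in> P. M \<subseteq> C"
  shows "P = MHS V H x"
proof
  show "P \<subseteq> MHS V H x"
  proof
    fix C assume "C \<in> P"
    have "M = C" if M: "homogeneous_set V H M" "x \<notin> M" "C \<subseteq> M" for M
    proof -
      obtain C' where "C' \<in> P" "M \<subseteq> C'" using cover[OF M(1,2)] by blast
      moreover have "C \<noteq> {}" using blocks[OF \<open>C \<in> P\<close>] unfolding homogeneous_set_def by blast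
      ultimately have "C' = C"
        using disj \<open>C \<in> P\<close> M(3) unfolding pairwise_def disjnt_def by blast
      then show ?thesis using \<open>M \<subseteq> C'\<close> M(3) by blast
    qed
    then show "C \<in> MHS V H x" using blocks[OF \<open>C \<in> P\<close>] unfolding MHS_def by blast
  qed
next
  show "MHS V H x \<subseteq> P"
  proof
    fix M assume "M \<in> MHS V H x"
    then have M: "homogeneous_set V H M" "x \<notin> M"
      and maximal: "\<And>M'. homogeneous_set V H M' \<and> x \<notin> M' \<and> M \<subseteq> M' \<Longrightarrow> M' = M"
      unfolding MHS_def by blast+
    obtain C where "C \<in> P" "M \<subseteq> C" using cover[OF M] by blast
    then show "M \<in> P" using maximal blocks by metis
  qed
qed

theorem mainTheorem10:
  fixes V :: "'a set" and H :: "('a \<times> 'a \<times> 'a) set" and x :: 'a and P :: "'a set set"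
  assumes "finite V" and "card V \<ge> 2"
    and "homogeneous_rel V H"
    and "x \<in> V"
    and "(refine_step V H x)\<^sup>*\<^sup>* (initial_partition V H x) P"
    and "refine_stable V H x P"
  shows "P = MHS V H x"
proof -
  have inv: "refinement_invariant V H x P"
    using refinement_invariant_reachable[OF assms(3-5)] .
  show ?thesis
  proof (rule MHS_eqI)
    show "pairwise disjnt P" using inv unfolding refinement_invariant_def by blast
    show "homogeneous_set V H C \<and> x \<notin> C" if "C \<in> P" for C
      using stable_block_homogeneous[OF assms(3,4) inv assms(6) that] by blast
    show "\<exists>C \<in> P. M \<subseteq> C" if "homogeneous_set V H M" "x \<notin> M" for M
      using inv that unfolding refinement_invariant_def by blast
  qed
qed

end
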